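(* Let $f:\mathbb{R}^n\to\mathbb{R}$ be differentiable, $\mu$-strongly convex, with $L$-Lipschitz gradient $\nabla f$, and let $x^*$ be its unique minimizer. Suppose the estimators $G^t$ are independent versions of an unbiased estimator $G$ of $\nabla f$, and that $G$ is $L$-Lipschitz continuous almost surely. Let $\mathcal{E}^t$ denote the event that $\|G^t(x^t)\|_\infty\le\eta$. Then the iterates of SMGD satisfy $$\mathbb{E}\left[\|x^{t+1}-x^*\|_2^2\,\middle|\,x^t,\mathcal{E}^t\right]\le\Big(1-\frac{2\alpha\mu}{\eta}\Big)\|x^t-x^*\|_2^2+\frac{L\alpha^2\sqrt{n}}{\eta}\|x^t-x^*\|_2+\frac{\alpha^2}{\eta}\,\mathbb{E}\left[\|G^t(x^* )\|_1\,\middle|\,x^t,\mathcal{E}^t\right].$$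
   Context: A differentiable $f$ is $\mu$-strongly convex if $\langle\nabla f(x)-\nabla f(y),x-y\rangle\ge\mu\|x-y\|_2^2$ for all $x,y$. SMGD: Let $\alpha>0$, $\eta>0$, $x^0\in\alpha\mathbb{Z}^n$. At step $t$ a random vector $G^t(x^t)\in\mathbb{R}^n$ is drawn; then for each coordinate $i$, conditionally on $G^t$ and $x^t$, $\Delta^t_i\in\{0,1\}$ is Bernoulli with $\mathbb{P}[\Delta^t_i=1\mid G^t,x^t]=\min(|G^t(x^t)_i|/\eta,1)$, and $x^{t+1}_i=x^t_i-\alpha\,\mathrm{sgn}(G^t(x^t)_i)\Delta^t_i$. A random function $G$ is an unbiased estimator of $\nabla f$ if $\mathbb{E}[G(x)]=\nabla f(x)$ for all $x$. Standing assumptions: $\{G^t\}$ are i.i.d. copies of $G$, each $G^t$ is independent of $x^t$, and $\mathbb{E}[G^t(x^t)\mid x^t,\mathcal{E}^t]=\nabla f(x^t)$. *)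

theory Defs
  imports "HOL-Probability.Probability"
begin

definition l1norm :: "real^'n::finite \<Rightarrow> real" where
  "l1norm v = (\<Sum>i\<in>UNIV. \<bar>v $ i\<bar>)"

definition cond_exp_event :: "'a measure \<Rightarrow> 'a set \<Rightarrow> ('a \<Rightarrow> real) \<Rightarrow> real" where
  "cond_exp_event M E X = (\<integral>\<omega>. indicator E \<omega> * X \<omega> \<partial>M) / measure M E"

text \<open>Conditional law of the Bernoulli mask Delta of SMGD given the gradient sample g:
  independent coordinates, P[Delta_i = 1] = min(|g_i|/eta, 1).\<close>
definition smgd_delta_pmf :: "real \<Rightarrow> real^'n::finite \<Rightarrow> ('n \<Rightarrow> bool) pmf" where
  "smgd_delta_pmf \<eta> g = Pi_pmf UNIV False (\<lambda>i. bernoulli_pmf (min (\<bar>g $ i\<bar> / \<eta>) 1))"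

definition smgd_update :: "real \<Rightarrow> real^'n::finite \<Rightarrow> real^'n \<Rightarrow> ('n \<Rightarrow> bool) \<Rightarrow> real^'n" where
  "smgd_update \<alpha> x g D = (\<chi> i. x $ i - \<alpha> * sgn (g $ i) * (if D i then 1 else 0))"

end

theory Submission
  imports Defs
begin

text \<open>Given the sample \<open>g\<close> with \<open>\<parallel>g\<parallel>\<^sub>\<infinity> \<le> \<eta>\<close>, the random step \<open>\<alpha> sgn(g\<^sub>i) \<Delta>\<^sub>i\<close> has mean
  \<open>\<alpha> g\<^sub>i / \<eta>\<close> and second moment \<open>\<alpha>\<^sup>2 \<bar>g\<^sub>i\<bar> / \<eta>\<close> in each coordinate, so the expected squared
  distance to \<open>x\<^sup>*\<close> after one step is exactly
  \<open>\<parallel>x - x\<^sup>*\<parallel>\<^sup>2 - 2\<alpha>/\<eta> \<langle>g, x - x\<^sup>*\<rangle> + \<alpha>\<^sup>2/\<eta> \<parallel>g\<parallel>\<^sub>1\<close>.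
  Conditioning on \<open>\<E>\<close>, the inner product averages to \<open>\<langle>\<nabla>f(x), x - x\<^sup>*\<rangle> \<ge> \<mu> \<parallel>x - x\<^sup>*\<parallel>\<^sup>2\<close>
  (strong convexity with \<open>\<nabla>f(x\<^sup>*) = 0\<close>), while the Lipschitz property of \<open>G\<close> and
  \<open>\<parallel>v\<parallel>\<^sub>1 \<le> \<surd>n \<parallel>v\<parallel>\<^sub>2\<close> give \<open>\<parallel>G(x)\<parallel>\<^sub>1 \<le> \<parallel>G(x\<^sup>*)\<parallel>\<^sub>1 + \<surd>n L \<parallel>x - x\<^sup>*\<parallel>\<close>.\<close>

lemma gradient_eq_0_at_minimum:
  fixes f :: "'a::real_inner \<Rightarrow> real"
  assumes "(f has_derivative (\<lambda>h. g \<bullet> h)) (at x)" and "\<forall>y. f x \<le> f y"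
  shows "g = 0"
proof -
  have "(\<lambda>h. g \<bullet> h) = (\<lambda>h. 0)"
    using differential_zero_maxmin[of x UNIV f "\<lambda>h. g \<bullet> h"] assms by auto
  then have "g \<bullet> g = 0" by metis
  then show ?thesis by simp
qed

lemma power2_norm_vec_eq_sum: "(norm (v::real^'n))\<^sup>2 = (\<Sum>i\<in>UNIV. (v $ i)\<^sup>2)"
  by (simp add: norm_vec_def L2_set_def sum_nonneg)

lemma l1norm_add_le: "l1norm (a + b) \<le> l1norm a + l1norm b"
  unfolding l1norm_def sum.distrib[symmetric] by (rule sum_mono) (simp add: abs_triangle_ineq)

lemma l1norm_le_sqrt_card_norm: "l1norm (v::real^'n::finite) \<le> sqrt (real CARD('n)) * norm v"
proof -
  have "(l1norm v)\<^sup>2 \<le> (\<Sum>i\<in>UNIV. \<bar>v $ i\<bar>\<^sup>2) * CARD('n)"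
    unfolding l1norm_def by (rule sum_squared_le_sum_of_squares)
  also have "\<dots> = (sqrt (real CARD('n)) * norm v)\<^sup>2"
    by (simp add: power2_norm_vec_eq_sum power_mult_distrib)
  finally show ?thesis
    by (rule power2_le_imp_le) simp
qed

lemma l1norm_le_add_sqrt_card_norm_diff:
  "l1norm (a::real^'n::finite) \<le> l1norm b + sqrt (real CARD('n)) * norm (a - b)"
  using l1norm_add_le[of b "a - b"] l1norm_le_sqrt_card_norm[of "a - b"] by simp

lemma integrable_l1norm:
  fixes V :: "'w \<Rightarrow> real^'n::finite"
  assumes "integrable M V"
  shows "integrable M (\<lambda>\<omega>. l1norm (V \<omega>))"
proof -
  have "integrable M (\<lambda>\<omega>. V \<omega> $ i)" for i
    using integrable_inner_left[OF assms, of "axis i 1"] by (simp add: inner_axis)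
  then show ?thesis
    unfolding l1norm_def by (intro Bochner_Integration.integrable_sum integrable_abs)
qed

lemma expectation_bernoulli_sign_step_sq:
  assumes "\<bar>g\<bar> \<le> \<eta>" and "\<eta> > 0"
  shows "measure_pmf.expectation (bernoulli_pmf (\<bar>g\<bar> / \<eta>))
           (\<lambda>b. (a - \<alpha> * sgn g * (if b then 1 else 0))\<^sup>2)
         = a\<^sup>2 - 2 * \<alpha> / \<eta> * (g * a) + \<alpha>\<^sup>2 / \<eta> * \<bar>g\<bar>"
proof -
  have "measure_pmf.expectation (bernoulli_pmf (\<bar>g\<bar> / \<eta>))
          (\<lambda>b. (a - \<alpha> * sgn g * (if b then 1 else 0))\<^sup>2)
        = (a - \<alpha> * sgn g)\<^sup>2 * (\<bar>g\<bar> / \<eta>) + a\<^sup>2 * (1 - \<bar>g\<bar> / \<eta>)"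
    using assms by (subst integral_bernoulli_pmf) auto
  also have "\<dots> = a\<^sup>2 - 2 * \<alpha> / \<eta> * (g * a) + \<alpha>\<^sup>2 / \<eta> * \<bar>g\<bar>"
    using assms by (cases "g > 0"; cases "g < 0") (auto simp: field_simps power2_eq_square sgn_if)
  finally show ?thesis .
qed

lemma expectation_smgd_update_dist_sq:
  fixes g x y :: "real^'n::finite"
  assumes "\<eta> > 0" and "\<And>i. \<bar>g $ i\<bar> \<le> \<eta>"
  shows "measure_pmf.expectation (smgd_delta_pmf \<eta> g) (\<lambda>D. (norm (smgd_update \<alpha> x g D - y))\<^sup>2)
         = (norm (x - y))\<^sup>2 - 2 * \<alpha> / \<eta> * (g \<bullet> (x - y)) + \<alpha>\<^sup>2 / \<eta> * l1norm g"
proof -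
  let ?P = "smgd_delta_pmf \<eta> g"
  let ?step = "\<lambda>i b. ((x - y) $ i - \<alpha> * sgn (g $ i) * (if b then 1 else 0))\<^sup>2"
  have "finite (set_pmf ?P)"
    by (rule finite_subset[of _ UNIV]) auto
  then have integrable: "integrable ?P (\<lambda>D. ?step i (D i))" for i
    by (rule integrable_measure_pmf_finite)
  have marginal: "map_pmf (\<lambda>D. D i) ?P = bernoulli_pmf (\<bar>g $ i\<bar> / \<eta>)" for i
    using assms unfolding smgd_delta_pmf_def by (subst Pi_pmf_component) auto
  have "measure_pmf.expectation ?P (\<lambda>D. (norm (smgd_update \<alpha> x g D - y))\<^sup>2)
        = measure_pmf.expectation ?P (\<lambda>D. \<Sum>i\<in>UNIV. ?step i (D i))"
    by (simp add: power2_norm_vec_eq_sum smgd_update_def algebra_simps)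
  also have "\<dots> = (\<Sum>i\<in>UNIV. measure_pmf.expectation ?P (\<lambda>D. ?step i (D i)))"
    using integrable by (rule Bochner_Integration.integral_sum)
  also have "\<dots> = (\<Sum>i\<in>UNIV. measure_pmf.expectation (bernoulli_pmf (\<bar>g $ i\<bar> / \<eta>)) (?step i))"
    by (simp flip: marginal add: integral_map_pmf)
  also have "\<dots> = (\<Sum>i\<in>UNIV. ((x - y) $ i)\<^sup>2 - 2 * \<alpha> / \<eta> * (g $ i * (x - y) $ i) + \<alpha>\<^sup>2 / \<eta> * \<bar>g $ i\<bar>)"
    using assms by (intro sum.cong refl expectation_bernoulli_sign_step_sq) auto
  also have "\<dots> = (norm (x - y))\<^sup>2 - 2 * \<alpha> / \<eta> * (g \<bullet> (x - y)) + \<alpha>\<^sup>2 / \<eta> * l1norm g"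
    by (simp add: power2_norm_vec_eq_sum l1norm_def inner_vec_def sum.distrib sum_subtractf
        sum_distrib_left)
  finally show ?thesis .
qed

lemma cond_exp_event_cong:
  "(\<And>\<omega>. \<omega> \<in> E \<Longrightarrow> X \<omega> = Y \<omega>) \<Longrightarrow> cond_exp_event M E X = cond_exp_event M E Y"
  unfolding cond_exp_event_def by (metis indicator_simps mult_zero_left)

lemma cond_exp_event_add:
  assumes "E \<in> sets M" "integrable M X" "integrable M Y"
  shows "cond_exp_event M E (\<lambda>\<omega>. X \<omega> + Y \<omega>) = cond_exp_event M E X + cond_exp_event M E Y"
  using integrable_mult_indicator[OF assms(1,2)] integrable_mult_indicator[OF assms(1,3)]
  by (simp add: cond_exp_event_def distrib_left add_divide_distrib)

lemma cond_exp_event_diff: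
  assumes "E \<in> sets M" "integrable M X" "integrable M Y"
  shows "cond_exp_event M E (\<lambda>\<omega>. X \<omega> - Y \<omega>) = cond_exp_event M E X - cond_exp_event M E Y"
  using integrable_mult_indicator[OF assms(1,2)] integrable_mult_indicator[OF assms(1,3)]
  by (simp add: cond_exp_event_def right_diff_distrib diff_divide_distrib)

lemma cond_exp_event_cmult: "cond_exp_event M E (\<lambda>\<omega>. c * X \<omega>) = c * cond_exp_event M E X"
  by (simp add: cond_exp_event_def mult.left_commute)

lemma cond_exp_event_divide: "cond_exp_event M E (\<lambda>\<omega>. X \<omega> / c) = cond_exp_event M E X / c"
  by (simp add: cond_exp_event_def)

lemma cond_exp_event_const:
  assumes "E \<subseteq> space M" "measure M E \<noteq> 0"
  shows "cond_exp_event M E (\<lambda>\<omega>. c) = c"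
  using assms by (simp add: cond_exp_event_def Int_absorb2)

lemma cond_exp_event_inner_left:
  fixes V :: "'w \<Rightarrow> 'a::euclidean_space"
  assumes "E \<in> sets M" "integrable M V"
  shows "cond_exp_event M E (\<lambda>\<omega>. V \<omega> \<bullet> c) = (\<integral>\<omega>. indicator E \<omega> *\<^sub>R V \<omega> \<partial>M) \<bullet> c / measure M E"
proof -
  have "(\<integral>\<omega>. indicator E \<omega> * (V \<omega> \<bullet> c) \<partial>M) = (\<integral>\<omega>. (indicator E \<omega> *\<^sub>R V \<omega>) \<bullet> c \<partial>M)"
    by simp
  also have "\<dots> = (\<integral>\<omega>. indicator E \<omega> *\<^sub>R V \<omega> \<partial>M) \<bullet> c"
    using integrable_mult_indicator[OF assms] by (rule integral_inner_left)
  finally show ?thesis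
    unfolding cond_exp_event_def by simp
qed

lemma cond_exp_event_mono:
  assumes "E \<in> sets M" "integrable M X" "integrable M Y" "AE \<omega> in M. \<omega> \<in> E \<longrightarrow> X \<omega> \<le> Y \<omega>"
  shows "cond_exp_event M E X \<le> cond_exp_event M E Y"
proof -
  have "(\<integral>\<omega>. indicator E \<omega> * X \<omega> \<partial>M) \<le> (\<integral>\<omega>. indicator E \<omega> * Y \<omega> \<partial>M)"
  proof (rule integral_mono_AE)
    show "integrable M (\<lambda>\<omega>. indicator E \<omega> * X \<omega>)" "integrable M (\<lambda>\<omega>. indicator E \<omega> * Y \<omega>)"
      using integrable_mult_indicator[OF assms(1,2)] integrable_mult_indicator[OF assms(1,3)] by simp_all
    show "AE \<omega> in M. indicator E \<omega> * X \<omega> \<le> indicator E \<omega> * Y \<omega>"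
      using assms(4) by eventually_elim (simp add: indicator_def)
  qed
  then show ?thesis
    unfolding cond_exp_event_def by (simp add: divide_right_mono)
qed

lemma (in finite_measure) cond_exp_event_smgd_dist_sq:
  fixes V :: "'a \<Rightarrow> real^'n::finite"
  assumes "E \<in> sets M" "measure M E \<noteq> 0" "integrable M V" "\<eta> > 0"
    and "\<And>\<omega> i. \<omega> \<in> E \<Longrightarrow> \<bar>V \<omega> $ i\<bar> \<le> \<eta>"
  shows "cond_exp_event M E (\<lambda>\<omega>. measure_pmf.expectation (smgd_delta_pmf \<eta> (V \<omega>))
                               (\<lambda>D. (norm (smgd_update \<alpha> x (V \<omega>) D - y))\<^sup>2))
         = (norm (x - y))\<^sup>2 - 2 * \<alpha> / \<eta> * cond_exp_event M E (\<lambda>\<omega>. V \<omega> \<bullet> (x - y))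
           + \<alpha>\<^sup>2 / \<eta> * cond_exp_event M E (\<lambda>\<omega>. l1norm (V \<omega>))"
proof -
  have "cond_exp_event M E (\<lambda>\<omega>. measure_pmf.expectation (smgd_delta_pmf \<eta> (V \<omega>))
                               (\<lambda>D. (norm (smgd_update \<alpha> x (V \<omega>) D - y))\<^sup>2))
        = cond_exp_event M E (\<lambda>\<omega>. (norm (x - y))\<^sup>2 - 2 * \<alpha> / \<eta> * (V \<omega> \<bullet> (x - y))
                                   + \<alpha>\<^sup>2 / \<eta> * l1norm (V \<omega>))"
    using assms(4,5) by (intro cond_exp_event_cong expectation_smgd_update_dist_sq)
  also have "\<dots> = (norm (x - y))\<^sup>2 - 2 * \<alpha> / \<eta> * cond_exp_event M E (\<lambda>\<omega>. V \<omega> \<bullet> (x - y))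
                  + \<alpha>\<^sup>2 / \<eta> * cond_exp_event M E (\<lambda>\<omega>. l1norm (V \<omega>))"
    using assms(1-3) integrable_l1norm[OF assms(3)]
    by (simp add: cond_exp_event_add cond_exp_event_diff cond_exp_event_cmult cond_exp_event_divide
        cond_exp_event_const sets.sets_into_space)
  finally show ?thesis .
qed

theorem theorem5p1:
  fixes f :: "real^'n::finite \<Rightarrow> real"
    and gradf :: "real^'n \<Rightarrow> real^'n"
    and \<mu> L \<alpha> \<eta> :: real
    and xstar x :: "real^'n"
    and M :: "'w measure"
    and G :: "'w \<Rightarrow> real^'n \<Rightarrow> real^'n"
  assumes grad: "\<forall>y. (f has_derivative (\<lambda>h. gradf y \<bullet> h)) (at y)"
    and mu_pos: "\<mu> > 0"
    and strongly_convex: "\<forall>y z. (gradf y - gradf z) \<bullet> (y - z) \<ge> \<mu> * (norm (y - z))\<^sup>2"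
    and grad_lipschitz: "\<forall>y z. norm (gradf y - gradf z) \<le> L * norm (y - z)"
    and minimizer: "\<forall>y. f xstar \<le> f y"
    and alpha_pos: "\<alpha> > 0" and eta_pos: "\<eta> > 0"
    and iterate_grid: "\<forall>i. \<exists>k::int. x $ i = \<alpha> * of_int k"
    and prob: "prob_space M"
    and G_meas: "\<forall>y. (\<lambda>\<omega>. G \<omega> y) \<in> borel_measurable M"
    and G_integrable: "\<forall>y. integrable M (\<lambda>\<omega>. G \<omega> y)"
    and unbiased: "\<forall>y. (\<integral>\<omega>. G \<omega> y \<partial>M) = gradf y"
    and G_lipschitz: "AE \<omega> in M. \<forall>y z. norm (G \<omega> y - G \<omega> z) \<le> L * norm (y - z)"
    and E_pos: "measure M {\<omega>\<in>space M. infnorm (G \<omega> x) \<le> \<eta>} > 0"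
    and cond_unbiased: "(\<integral>\<omega>. indicator {\<omega>\<in>space M. infnorm (G \<omega> x) \<le> \<eta>} \<omega> *\<^sub>R G \<omega> x \<partial>M)
        = measure M {\<omega>\<in>space M. infnorm (G \<omega> x) \<le> \<eta>} *\<^sub>R gradf x"
  shows "cond_exp_event M {\<omega>\<in>space M. infnorm (G \<omega> x) \<le> \<eta>}
           (\<lambda>\<omega>. measure_pmf.expectation (smgd_delta_pmf \<eta> (G \<omega> x))
                   (\<lambda>D. (norm (smgd_update \<alpha> x (G \<omega> x) D - xstar))\<^sup>2))
         \<le> (1 - 2 * \<alpha> * \<mu> / \<eta>) * (norm (x - xstar))\<^sup>2
           + L * \<alpha>\<^sup>2 * sqrt (real CARD('n)) / \<eta> * norm (x - xstar)
           + \<alpha>\<^sup>2 / \<eta> * cond_exp_event M {\<omega>\<in>space M. infnorm (G \<omega> x) \<le> \<eta>} (\<lambda>\<omega>. l1norm (G \<omega> xstar))"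
proof -
  interpret prob_space M by (rule prob)
  define E where "E = {\<omega>\<in>space M. infnorm (G \<omega> x) \<le> \<eta>}"
  define d where "d = x - xstar"
  define K where "K = sqrt (real CARD('n)) * L * norm d"
  have "(\<lambda>\<omega>. infnorm (G \<omega> x)) \<in> borel_measurable M"
    using borel_measurable_continuous_on[OF continuous_on_infnorm[OF continuous_on_id]] G_meas
    by blast
  then have E_sets: "E \<in> sets M"
    unfolding E_def by measurable
  have E_pos': "measure M E \<noteq> 0"
    using E_pos unfolding E_def by simp
  have iG: "integrable M (\<lambda>\<omega>. G \<omega> y)" for y
    using G_integrable by blast
  have bounded: "\<bar>G \<omega> x $ i\<bar> \<le> \<eta>" if "\<omega> \<in> E" for \<omega> i
    using that component_le_infnorm_cart order_trans unfolding E_def by blast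
  have "gradf xstar = 0"
    using gradient_eq_0_at_minimum grad minimizer by blast
  then have descent: "\<mu> * (norm d)\<^sup>2 \<le> gradf x \<bullet> d"
    using strongly_convex unfolding d_def by (metis diff_zero)
  have mean: "cond_exp_event M E (\<lambda>\<omega>. G \<omega> x \<bullet> d) = gradf x \<bullet> d"
    using cond_exp_event_inner_left[OF E_sets iG] cond_unbiased E_pos' by (simp add: E_def)
  have l1_bound: "cond_exp_event M E (\<lambda>\<omega>. l1norm (G \<omega> x))
                  \<le> cond_exp_event M E (\<lambda>\<omega>. l1norm (G \<omega> xstar)) + K"
  proof -
    have "AE \<omega> in M. \<omega> \<in> E \<longrightarrow> l1norm (G \<omega> x) \<le> l1norm (G \<omega> xstar) + K"
      using G_lipschitz
    proof eventually_elim
      case (elim \<omega>)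
      have "sqrt (real CARD('n)) * norm (G \<omega> x - G \<omega> xstar) \<le> K"
        using elim unfolding K_def d_def by (simp add: mult.assoc mult_left_mono)
      then show ?case
        using l1norm_le_add_sqrt_card_norm_diff[of "G \<omega> x" "G \<omega> xstar"] by simp
    qed
    then have "cond_exp_event M E (\<lambda>\<omega>. l1norm (G \<omega> x))
               \<le> cond_exp_event M E (\<lambda>\<omega>. l1norm (G \<omega> xstar) + K)"
      using E_sets integrable_l1norm[OF iG] by (intro cond_exp_event_mono) auto
    also have "\<dots> = cond_exp_event M E (\<lambda>\<omega>. l1norm (G \<omega> xstar)) + K"
      using E_sets E_pos' integrable_l1norm[OF iG]
      by (simp add: cond_exp_event_add cond_exp_event_const sets.sets_into_space)
    finally show ?thesis .
  qed
  have "cond_exp_event M E (\<lambda>\<omega>. measure_pmf.expectation (smgd_delta_pmf \<eta> (G \<omega> x))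
                (\<lambda>D. (norm (smgd_update \<alpha> x (G \<omega> x) D - xstar))\<^sup>2))
        = (norm d)\<^sup>2 - 2 * \<alpha> / \<eta> * (gradf x \<bullet> d)
          + \<alpha>\<^sup>2 / \<eta> * cond_exp_event M E (\<lambda>\<omega>. l1norm (G \<omega> x))"
    using cond_exp_event_smgd_dist_sq[OF E_sets E_pos' iG eta_pos bounded] mean
    unfolding d_def by simp
  also have "\<dots> \<le> (norm d)\<^sup>2 - 2 * \<alpha> / \<eta> * (\<mu> * (norm d)\<^sup>2)
                  + \<alpha>\<^sup>2 / \<eta> * (cond_exp_event M E (\<lambda>\<omega>. l1norm (G \<omega> xstar)) + K)"
    using descent l1_bound alpha_pos eta_pos by (intro add_mono diff_mono mult_left_mono) auto
  also have "\<dots> = (1 - 2 * \<alpha> * \<mu> / \<eta>) * (norm d)\<^sup>2 + L * \<alpha>\<^sup>2 * sqrt (real CARD('n)) / \<eta> * norm d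
                  + \<alpha>\<^sup>2 / \<eta> * cond_exp_event M E (\<lambda>\<omega>. l1norm (G \<omega> xstar))"
    unfolding K_def by (simp add: field_simps add_divide_distrib)
  finally show ?thesis
    unfolding E_def d_def .
qed

end
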